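(* Let $n\ge1$, $\rho\in(0,1)$, $\alpha\ge0$, and let $F:\mathbb{R}^n\to\mathbb{R}^n$ be $\rho$-Lipschitz with $F(x)=Gx+\xi(x)$, where $G\in\mathbb{R}^{n\times n}$ is symmetric positive semidefinite with $G\preccurlyeq\rho I$ and $\xi:\mathbb{R}^n\to\mathbb{R}^n$ is $\alpha$-Lipschitz. Let $C\ge1$, $k>2$ an integer, $x_0\in\mathbb{R}^n$, and let $x_e$ be the output of Constrained Anderson Acceleration started at $x_0$ with parameters $C,k$. Then $\|F(x_e)-x_e\|\le\hat\rho(C)\|F(x_0)-x_0\|$, where $\hat\rho(C)=\tilde\rho(C)+3\alpha kC$. Moreover, for every positive integer $M$, $$\hat\rho(C)\le\max_{i\in\{-1,\dots,M\}}\max\Big(\frac{C-C_i}{C_{i+1}-C_i}\rho_{i+1}+\frac{C_{i+1}-C}{C_{i+1}-C_i}\rho_i,\ \rho_*\Big)+3\alpha kC.$$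
   Context: $\|\cdot\|$ is the Euclidean norm; $\mathbb{R}_k[X]$ is real polynomials of degree at most $k$; $\|p\|_1$ is the sum of absolute values of coefficients of $p$, and $\|c\|_1=\sum_i|c_i|$. Constrained Anderson Acceleration: set $x_{i+1}=F(x_i)$ for $i=0,\dots,k$; $R=[x_0-x_1,\dots,x_k-x_{k+1}]$; $\tilde c\in\arg\min\{\|Rc\|:\mathbf 1^Tc=1,\ \|c\|_1\le C\}$; output $x_e=\sum_{i=0}^k\tilde c_ix_i$. $\tilde\rho(C)=\min\{\max_{x\in[0,\rho]}|p(x)|:p\in\mathbb{R}_k[X],\ p(1)=1,\ \|p\|_1\le C\}$. $T_k$ is the first-kind Chebyshev polynomial of degree $k$; for $\varepsilon\ge0$, $p_\varepsilon(X)=T_k\big(2\frac{X+\varepsilon}{\rho+\varepsilon}-1\big)/\big|T_k\big(2\frac{1+\varepsilon}{\rho+\varepsilon}-1\big)\big|$; $C_*=\|p_0\|_1$; $\rho_*=\frac{2\beta^k}{1+\beta^{2k}}$ with $\beta=\frac{1-\sqrt{1-\rho}}{1+\sqrt{1-\rho}}$. Given $M$: $\varepsilon_i=\rho/2^{i-1}$, $C_i=\|p_{\varepsilon_i}\|_1$ and $\rho_i=\frac{2\beta_i^k}{1+\beta_i^{2k}}$ with $\beta_i=\frac{1-\sqrt{1-\frac{\rho+\varepsilon_i}{1+\varepsilon_i}}}{1+\sqrt{1-\frac{\rho+\varepsilon_i}{1+\varepsilon_i}}}$ for $i=1,\dots,M$; $C_{-1}=1$, $\rho_{-1}=\rho^k$;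 $C_0=\frac{2+\rho^k}{2-\rho^k}$, $\rho_0=\frac{\rho^k}{2-\rho^k}$; $C_{M+1}=C_*$, $\rho_{M+1}=\rho_*$. *)

theory Defs
  imports "HOL-Analysis.Analysis" "HOL-Computational_Algebra.Polynomial"
begin

fun cheb :: "nat \<Rightarrow> real poly" where
  "cheb 0 = 1"
| "cheb (Suc 0) = [:0, 1:]"
| "cheb (Suc (Suc n)) = [:0, 2:] * cheb (Suc n) - cheb n"

definition poly_l1 :: "real poly \<Rightarrow> real" where
  "poly_l1 p = (\<Sum>i\<le>degree p. \<bar>coeff p i\<bar>)"

definition rho_tilde :: "real \<Rightarrow> nat \<Rightarrow> real \<Rightarrow> real" where
  "rho_tilde \<rho> k C = Inf {Sup ((\<lambda>x. \<bar>poly p x\<bar>) ` {0..\<rho>}) | p.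
      degree p \<le> k \<and> poly p 1 = 1 \<and> poly_l1 p \<le> C}"

definition p_eps :: "real \<Rightarrow> nat \<Rightarrow> real \<Rightarrow> real poly" where
  "p_eps \<rho> k \<epsilon> =
     smult (1 / \<bar>poly (cheb k) (2 * (1 + \<epsilon>) / (\<rho> + \<epsilon>) - 1)\<bar>)
       (pcompose (cheb k) [: 2 * \<epsilon> / (\<rho> + \<epsilon>) - 1, 2 / (\<rho> + \<epsilon>) :])"

definition beta_of :: "real \<Rightarrow> real" where
  "beta_of r = (1 - sqrt (1 - r)) / (1 + sqrt (1 - r))"

definition rate_of_beta :: "nat \<Rightarrow> real \<Rightarrow> real" where
  "rate_of_beta k b = 2 * b ^ k / (1 + b ^ (2 * k))"

definition C_star :: "real \<Rightarrow> nat \<Rightarrow> real" where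
  "C_star \<rho> k = poly_l1 (p_eps \<rho> k 0)"

definition rho_star :: "real \<Rightarrow> nat \<Rightarrow> real" where
  "rho_star \<rho> k = rate_of_beta k (beta_of \<rho>)"

definition eps_i :: "real \<Rightarrow> int \<Rightarrow> real" where
  "eps_i \<rho> i = \<rho> / 2 powi (i - 1)"

definition C_node :: "real \<Rightarrow> nat \<Rightarrow> nat \<Rightarrow> int \<Rightarrow> real" where
  "C_node \<rho> k M i =
    (if i = -1 then 1
     else if i = 0 then (2 + \<rho> ^ k) / (2 - \<rho> ^ k)
     else if 1 \<le> i \<and> i \<le> int M then poly_l1 (p_eps \<rho> k (eps_i \<rho> i))
     else C_star \<rho> k)"

definition rho_node :: "real \<Rightarrow> nat \<Rightarrow> nat \<Rightarrow> int \<Rightarrow> real" where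
  "rho_node \<rho> k M i =
    (if i = -1 then \<rho> ^ k
     else if i = 0 then \<rho> ^ k / (2 - \<rho> ^ k)
     else if 1 \<le> i \<and> i \<le> int M then
       rate_of_beta k (beta_of ((\<rho> + eps_i \<rho> i) / (1 + eps_i \<rho> i)))
     else rho_star \<rho> k)"

definition caa_iter :: "('a \<Rightarrow> 'a) \<Rightarrow> 'a \<Rightarrow> nat \<Rightarrow> 'a" where
  "caa_iter F x0 i = (F ^^ i) x0"

definition caa_feasible :: "nat \<Rightarrow> real \<Rightarrow> (nat \<Rightarrow> real) \<Rightarrow> bool" where
  "caa_feasible k C c \<longleftrightarrow> (\<Sum>i\<le>k. c i) = 1 \<and> (\<Sum>i\<le>k. \<bar>c i\<bar>) \<le> C"

definition caa_resid :: "('a::real_vector \<Rightarrow> 'a) \<Rightarrow> 'a \<Rightarrow> nat \<Rightarrow> (nat \<Rightarrow> real) \<Rightarrow> 'a" where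
  "caa_resid F x0 k c = (\<Sum>i\<le>k. c i *\<^sub>R (caa_iter F x0 i - caa_iter F x0 (Suc i)))"

definition caa_output :: "('a::real_normed_vector \<Rightarrow> 'a) \<Rightarrow> nat \<Rightarrow> real \<Rightarrow> 'a \<Rightarrow> 'a \<Rightarrow> bool" where
  "caa_output F k C x0 xe \<longleftrightarrow>
    (\<exists>c. caa_feasible k C c
       \<and> (\<forall>d. caa_feasible k C d \<longrightarrow> norm (caa_resid F x0 k c) \<le> norm (caa_resid F x0 k d))
       \<and> xe = (\<Sum>i\<le>k. c i *\<^sub>R caa_iter F x0 i))"

end

theory Submission
  imports Defs
begin

text \<open>Write F = G + xi and let r_i = x_i - x_(i+1) be the residuals of the iteration. For a
  polynomial p of degree at most k with p(1) = 1 and coefficient l1-norm at most C, the CAA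
  residual of the coefficient vector of p is p(G) r_0 up to an error alpha k C |r_0|, and
  |p(G)| is at most the maximum of |p| on [0, rho] because G is symmetric with spectrum in
  [0, rho]. The CAA coefficients minimise the residual, and F(x_e) - x_e differs from minus
  their residual only by the non-affinity of xi, of size at most 2 alpha k C |r_0|; optimising
  over p gives the factor rho_tilde(C) + 3 alpha k C.
  For the second bound, explicit polynomials are admissible at the nodes C_i (X^k, a shifted
  X^k and rescaled Chebyshev polynomials), and convex combinations of admissible polynomials
  are admissible with interpolated l1-norm and bound, so rho_tilde(C) lies below the linear
  interpolation between the two nodes enclosing C, and below rho_star beyond the last node.\<close>

section \<open>Polynomials in a self-adjoint map\<close>

lemma linear_funpow:
  fixes g :: "'a::real_vector \<Rightarrow> 'a"
  shows "linear g \<Longrightarrow> linear (g ^^ n)"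
  by (induction n) (simp_all add: linear_compose linear_id)

definition poly_map :: "real poly \<Rightarrow> ('a::real_vector \<Rightarrow> 'a) \<Rightarrow> 'a \<Rightarrow> 'a" where
  "poly_map p g v = (\<Sum>i\<le>degree p. coeff p i *\<^sub>R (g ^^ i) v)"

lemma poly_map_eq_sum_upto:
  "degree p \<le> n \<Longrightarrow> poly_map p g v = (\<Sum>i\<le>n. coeff p i *\<^sub>R (g ^^ i) v)"
  unfolding poly_map_def by (intro sum.mono_neutral_left) (auto simp: coeff_eq_0)

lemma linear_poly_map: "linear g \<Longrightarrow> linear (poly_map p g)"
  unfolding poly_map_def[abs_def]
  by (intro linear_compose_sum ballI module_hom_scale linear_funpow)

lemma poly_map_eigenvector:
  assumes "linear g" "g e = \<mu> *\<^sub>R e"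
  shows "poly_map p g e = poly p \<mu> *\<^sub>R e"
proof -
  have "(g ^^ i) e = \<mu> ^ i *\<^sub>R e" for i
    by (induction i) (simp_all add: assms linear_scale)
  then show ?thesis
    unfolding poly_map_def poly_altdef scaleR_sum_left by simp
qed

lemma poly_map_in_invariant_subspace:
  assumes "subspace S" "g ` S \<subseteq> S" "v \<in> S"
  shows "poly_map p g v \<in> S"
proof -
  have "(g ^^ i) v \<in> S" for i
    by (induction i) (use assms in auto)
  then show ?thesis
    unfolding poly_map_def using assms(1) by (intro subspace_sum subspace_scale) auto
qed

lemma linear_coeff_eq_0_if_quadratic_nonpos:
  fixes a b :: real
  assumes "\<And>t. 2 * t * a + t\<^sup>2 * b \<le> 0"
  shows "a = 0"
proof (rule ccontr)
  assume "a \<noteq> 0"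
  define t where "t = a / (1 + \<bar>b\<bar>)"
  have "t \<noteq> 0" using \<open>a \<noteq> 0\<close> by (simp add: t_def add_pos_nonneg)
  have "2 * t * a = 2 * t\<^sup>2 * (1 + \<bar>b\<bar>)"
    by (simp add: t_def power2_eq_square add_pos_nonneg)
  moreover have "t\<^sup>2 * (- \<bar>b\<bar>) \<le> t\<^sup>2 * b" by (intro mult_left_mono) auto
  moreover have "0 < t\<^sup>2 * (2 + \<bar>b\<bar>)" using \<open>t \<noteq> 0\<close> by simp
  ultimately show False using assms[of t] by (simp add: algebra_simps)
qed

lemma self_adjoint_quadratic_form_expand:
  fixes g :: "'a::real_inner \<Rightarrow> 'a"
  assumes lin: "linear g" and sym: "\<And>x y. g x \<bullet> y = x \<bullet> g y"
  shows "(e + t *\<^sub>R h) \<bullet> g (e + t *\<^sub>R h) - \<mu> * ((e + t *\<^sub>R h) \<bullet> (e + t *\<^sub>R h))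
    = (e \<bullet> g e - \<mu> * (e \<bullet> e)) + 2 * t * (h \<bullet> (g e - \<mu> *\<^sub>R e)) + t\<^sup>2 * (h \<bullet> g h - \<mu> * (h \<bullet> h))"
proof -
  have "e \<bullet> g h = h \<bullet> g e" using sym[of e h] by (simp add: inner_commute)
  moreover have "h \<bullet> e = e \<bullet> h" by (rule inner_commute)
  ultimately show ?thesis
    by (simp add: linear_add[OF lin] linear_scale[OF lin] inner_add_left inner_add_right
        inner_diff_right power2_eq_square algebra_simps)
qed

text \<open>A maximiser of the quadratic form on the unit sphere of an invariant subspace is an
  eigenvector: perturbing it within the subspace cannot increase the Rayleigh quotient, so the
  first-order term of the perturbation vanishes.\<close>
lemma self_adjoint_eigenvector_in_subspace:
  fixes g :: "'a::euclidean_space \<Rightarrow> 'a"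
  assumes lin: "linear g" and sym: "\<And>x y. g x \<bullet> y = x \<bullet> g y"
    and S: "subspace S" "g ` S \<subseteq> S" and x: "x \<in> S" "x \<noteq> 0"
  shows "\<exists>e \<mu>. e \<in> S \<and> norm e = 1 \<and> g e = \<mu> *\<^sub>R e"
proof -
  define K where "K = S \<inter> sphere 0 1"
  have "compact K"
    unfolding K_def using S(1) closed_subspace compact_sphere by (blast intro: closed_Int_compact)
  moreover have "x /\<^sub>R norm x \<in> K"
    using x S(1) by (auto simp: K_def subspace_scale)
  moreover have "continuous_on K (\<lambda>y. y \<bullet> g y)"
    using lin by (intro continuous_on_inner continuous_on_id linear_continuous_on)
      (simp add: linear_conv_bounded_linear)
  ultimately obtain e where eK: "e \<in> K" and emax: "\<And>y. y \<in> K \<Longrightarrow> y \<bullet> g y \<le> e \<bullet> g e"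
    using continuous_attains_sup by (metis empty_iff)
  define \<mu> where "\<mu> = e \<bullet> g e"
  have eS: "e \<in> S" and ee: "e \<bullet> e = 1"
    using eK by (auto simp: K_def dot_square_norm)
  have rayleigh: "y \<bullet> g y \<le> \<mu> * (y \<bullet> y)" if "y \<in> S" for y
  proof (cases "y = 0")
    case False
    have "y /\<^sub>R norm y \<in> K" using that S(1) False by (auto simp: K_def subspace_scale)
    then have "(y /\<^sub>R norm y) \<bullet> g (y /\<^sub>R norm y) \<le> \<mu>" using emax \<mu>_def by blast
    then show ?thesis
      using False by (simp add: linear_scale[OF lin] field_simps dot_square_norm power2_eq_square)
  qed (simp add: linear_0[OF lin])
  define h where "h = g e - \<mu> *\<^sub>R e"
  have hS: "h \<in> S" using S eS by (simp add: h_def subspace_diff subspace_scale image_subset_iff)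
  have "2 * t * (h \<bullet> h) + t\<^sup>2 * (h \<bullet> g h - \<mu> * (h \<bullet> h)) \<le> 0" for t
  proof -
    have "e + t *\<^sub>R h \<in> S" using S(1) eS hS by (simp add: subspace_add subspace_scale)
    then have "(e + t *\<^sub>R h) \<bullet> g (e + t *\<^sub>R h) - \<mu> * ((e + t *\<^sub>R h) \<bullet> (e + t *\<^sub>R h)) \<le> 0"
      using rayleigh by fastforce
    moreover have "e \<bullet> g e - \<mu> * (e \<bullet> e) = 0" using ee by (simp add: \<mu>_def)
    ultimately show ?thesis
      using self_adjoint_quadratic_form_expand[OF lin sym, of e t h \<mu>] by (simp add: h_def)
  qed
  then have "h \<bullet> h = 0" by (rule linear_coeff_eq_0_if_quadratic_nonpos)
  then have "g e = \<mu> *\<^sub>R e" by (simp add: h_def)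
  with eS eK show ?thesis by (auto simp: K_def)
qed

lemma dim_orthogonal_slice_less:
  fixes e :: "'a::euclidean_space"
  assumes "subspace S" "e \<in> S" "e \<noteq> 0"
  shows "dim (S \<inter> {y. e \<bullet> y = 0}) < dim S"
proof (rule dim_psubset)
  have "subspace (S \<inter> {y. e \<bullet> y = 0})"
    using assms(1) subspace_hyperplane by (rule subspace_inter)
  moreover have "e \<notin> {y. e \<bullet> y = 0}" using assms(3) by simp
  then have "S \<inter> {y. e \<bullet> y = 0} \<subset> S" using assms(2) by blast
  ultimately show "span (S \<inter> {y. e \<bullet> y = 0}) \<subset> span S"
    using assms(1) by (metis span_eq_iff)
qed

lemma self_adjoint_invariant_orthogonal_slice:
  assumes sym: "\<And>x y. g x \<bullet> y = x \<bullet> g y" and "g ` S \<subseteq> S" and "g e = \<mu> *\<^sub>R e"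
  shows "g ` (S \<inter> {y. e \<bullet> y = 0}) \<subseteq> S \<inter> {y. e \<bullet> y = 0}"
proof -
  have "e \<bullet> g y = \<mu> * (e \<bullet> y)" for y using sym[of e y] assms(3) by simp
  then show ?thesis using assms(2) by auto
qed

text \<open>Induction on the dimension of the invariant subspace: split off an eigenvector e,
  on which p(g) acts as the scalar p(mu) with mu in [0, rho]; the orthogonal complement of e
  in S is again invariant, and the two parts are combined by Pythagoras.\<close>
lemma norm_poly_map_le_on_invariant_subspace:
  fixes g :: "'a::euclidean_space \<Rightarrow> 'a"
  assumes lin: "linear g" and sym: "\<And>x y. g x \<bullet> y = x \<bullet> g y"
    and spec: "\<And>x. 0 \<le> x \<bullet> g x" "\<And>x. x \<bullet> g x \<le> \<rho> * (x \<bullet> x)"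
    and bound: "\<And>t. 0 \<le> t \<Longrightarrow> t \<le> \<rho> \<Longrightarrow> \<bar>poly p t\<bar> \<le> m" and m: "0 \<le> m"
  shows "subspace S \<Longrightarrow> g ` S \<subseteq> S \<Longrightarrow> v \<in> S \<Longrightarrow> norm (poly_map p g v) \<le> m * norm v"
proof (induction "dim S" arbitrary: S v rule: less_induct)
  case less
  show ?case
  proof (cases "S \<subseteq> {0}")
    case True
    with less.prems have "v = 0" by auto
    then show ?thesis using linear_0[OF linear_poly_map[OF lin]] by simp
  next
    case False
    then obtain x where "x \<in> S" "x \<noteq> 0" by auto
    then obtain e \<mu> where e: "e \<in> S" "norm e = 1" "g e = \<mu> *\<^sub>R e"
      using self_adjoint_eigenvector_in_subspace[OF lin sym less.prems(1,2)] by blast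
    have ee: "e \<bullet> e = 1" using e(2) by (simp add: dot_square_norm)
    then have "\<mu> = e \<bullet> g e" using e(3) by simp
    then have p\<mu>: "\<bar>poly p \<mu>\<bar> \<le> m" using spec[of e] ee by (intro bound) auto
    define S' where "S' = S \<inter> {y. e \<bullet> y = 0}"
    have S': "subspace S'" "g ` S' \<subseteq> S'"
      unfolding S'_def using less.prems(1) subspace_hyperplane
        self_adjoint_invariant_orthogonal_slice[OF sym less.prems(2) e(3)]
      by (auto intro: subspace_inter)
    have "dim S' < dim S"
      unfolding S'_def using less.prems(1) e(1,2) by (intro dim_orthogonal_slice_less) auto
    note IH = less.hyps[OF this S']
    define a where "a = e \<bullet> v"
    define w where "w = v - a *\<^sub>R e"
    have v: "v = a *\<^sub>R e + w" by (simp add: w_def)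
    have w: "w \<in> S'"
      using less.prems(1,3) e(1) ee by (simp add: S'_def w_def a_def subspace_diff subspace_scale inner_diff_right)
    then have "poly_map p g w \<in> S'" using S' by (intro poly_map_in_invariant_subspace)
    then have orth: "orthogonal (c *\<^sub>R e) (poly_map p g w)" "orthogonal (c *\<^sub>R e) w" for c
      using w by (simp_all add: S'_def orthogonal_def)
    have "poly_map p g v = (a * poly p \<mu>) *\<^sub>R e + poly_map p g w"
      by (simp add: v linear_add[OF linear_poly_map[OF lin]] linear_scale[OF linear_poly_map[OF lin]]
          poly_map_eigenvector[OF lin e(3)])
    then have "(norm (poly_map p g v))\<^sup>2 = (a * poly p \<mu>)\<^sup>2 + (norm (poly_map p g w))\<^sup>2"
      using norm_add_Pythagorean[OF orth(1)] e(2) by simp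
    also have "\<dots> \<le> (m * a)\<^sup>2 + (m * norm w)\<^sup>2"
    proof (rule add_mono)
      have "\<bar>a * poly p \<mu>\<bar> \<le> \<bar>m * a\<bar>"
        using p\<mu> m by (simp add: abs_mult mult.commute[of m] mult_left_mono)
      then show "(a * poly p \<mu>)\<^sup>2 \<le> (m * a)\<^sup>2" by (simp add: abs_le_square_iff)
    qed (use IH[OF w] in \<open>simp add: power_mono\<close>)
    also have "\<dots> = m\<^sup>2 * (norm v)\<^sup>2"
    proof -
      have "(norm v)\<^sup>2 = a\<^sup>2 + (norm w)\<^sup>2"
        using norm_add_Pythagorean[OF orth(2)] e(2) unfolding v by simp
      then show ?thesis by (simp add: power_mult_distrib algebra_simps)
    qed
    also have "\<dots> = (m * norm v)\<^sup>2" by (simp add: power_mult_distrib)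
    finally show ?thesis
      by (rule power2_le_imp_le) (use m in simp)
  qed
qed

lemma norm_poly_map_le:
  fixes g :: "'a::euclidean_space \<Rightarrow> 'a"
  assumes lin: "linear g" and sym: "\<And>x y. g x \<bullet> y = x \<bullet> g y"
    and spec: "\<And>x. 0 \<le> x \<bullet> g x" "\<And>x. x \<bullet> g x \<le> \<rho> * (x \<bullet> x)"
    and bound: "\<And>t. 0 \<le> t \<Longrightarrow> t \<le> \<rho> \<Longrightarrow> \<bar>poly p t\<bar> \<le> m"
  shows "norm (poly_map p g v) \<le> m * norm v"
proof -
  obtain b :: 'a where "b \<in> Basis" using nonempty_Basis by blast
  then have "0 \<le> \<rho>" using spec(1)[of b] spec(2)[of b] by simp
  then have "0 \<le> m" using bound[of 0] by linarith
  from norm_poly_map_le_on_invariant_subspace[OF assms this subspace_UNIV] show ?thesis by simp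
qed

section \<open>Admissible polynomials\<close>

lemma poly_l1_eq_sum_upto: "degree p \<le> n \<Longrightarrow> poly_l1 p = (\<Sum>i\<le>n. \<bar>coeff p i\<bar>)"
  unfolding poly_l1_def by (intro sum.mono_neutral_left) (auto simp: coeff_eq_0)

lemma poly_one_eq_sum_upto:
  fixes p :: "real poly"
  shows "degree p \<le> n \<Longrightarrow> poly p 1 = (\<Sum>i\<le>n. coeff p i)"
  unfolding poly_altdef by (simp, intro sum.mono_neutral_left) (auto simp: coeff_eq_0)

definition admissible_poly :: "real \<Rightarrow> nat \<Rightarrow> real \<Rightarrow> real \<Rightarrow> real poly \<Rightarrow> bool" where
  "admissible_poly \<rho> k C B p \<longleftrightarrow> degree p \<le> k \<and> poly p 1 = 1 \<and> poly_l1 p \<le> C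
     \<and> (\<forall>x\<in>{0..\<rho>}. \<bar>poly p x\<bar> \<le> B)"

lemma admissible_poly_mono: "admissible_poly \<rho> k C B p \<Longrightarrow> C \<le> C' \<Longrightarrow> admissible_poly \<rho> k C' B p"
  unfolding admissible_poly_def by auto

lemma admissible_poly_convex_comb:
  assumes p: "admissible_poly \<rho> k C\<^sub>1 B\<^sub>1 p" and q: "admissible_poly \<rho> k C\<^sub>2 B\<^sub>2 q"
    and t: "0 \<le> t" "t \<le> 1"
  shows "admissible_poly \<rho> k (t * C\<^sub>1 + (1 - t) * C\<^sub>2) (t * B\<^sub>1 + (1 - t) * B\<^sub>2)
           (smult t p + smult (1 - t) q)"
proof -
  let ?r = "smult t p + smult (1 - t) q"
  have dp: "degree p \<le> k" and dq: "degree q \<le> k" using p q by (auto simp: admissible_poly_def)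
  then have dr: "degree ?r \<le> k"
    by (intro degree_add_le) (auto intro: order_trans[OF degree_smult_le])
  have "poly_l1 ?r = (\<Sum>i\<le>k. \<bar>t * coeff p i + (1 - t) * coeff q i\<bar>)"
    using poly_l1_eq_sum_upto[OF dr] by simp
  also have "\<dots> \<le> (\<Sum>i\<le>k. t * \<bar>coeff p i\<bar> + (1 - t) * \<bar>coeff q i\<bar>)"
    by (intro sum_mono order_trans[OF abs_triangle_ineq]) (use t in \<open>simp add: abs_mult\<close>)
  also have "\<dots> = t * poly_l1 p + (1 - t) * poly_l1 q"
    by (simp add: poly_l1_eq_sum_upto[OF dp] poly_l1_eq_sum_upto[OF dq] sum.distrib sum_distrib_left)
  also have "\<dots> \<le> t * C\<^sub>1 + (1 - t) * C\<^sub>2"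
    using p q t by (intro add_mono mult_left_mono) (auto simp: admissible_poly_def)
  finally have "poly_l1 ?r \<le> t * C\<^sub>1 + (1 - t) * C\<^sub>2" .
  moreover have "\<bar>poly ?r x\<bar> \<le> t * B\<^sub>1 + (1 - t) * B\<^sub>2" if "x \<in> {0..\<rho>}" for x
  proof -
    have "\<bar>poly ?r x\<bar> \<le> t * \<bar>poly p x\<bar> + (1 - t) * \<bar>poly q x\<bar>"
      using abs_triangle_ineq[of "t * poly p x" "(1 - t) * poly q x"] t by (simp add: abs_mult)
    also have "\<dots> \<le> t * B\<^sub>1 + (1 - t) * B\<^sub>2"
      using p q t that by (intro add_mono mult_left_mono) (auto simp: admissible_poly_def)
    finally show ?thesis .
  qed
  ultimately show ?thesis
    using dr p q by (auto simp: admissible_poly_def algebra_simps)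
qed

lemma bdd_above_abs_poly: "bdd_above ((\<lambda>x. \<bar>poly p x\<bar>) ` {a..b::real})"
  by (intro bounded_imp_bdd_above compact_imp_bounded compact_continuous_image continuous_intros)
    auto

lemma rho_tilde_le_admissible:
  assumes "admissible_poly \<rho> k C B p" "0 \<le> \<rho>"
  shows "rho_tilde \<rho> k C \<le> B"
proof -
  have "rho_tilde \<rho> k C \<le> Sup ((\<lambda>x. \<bar>poly p x\<bar>) ` {0..\<rho>})"
    unfolding rho_tilde_def
  proof (rule cInf_lower)
    show "Sup ((\<lambda>x. \<bar>poly p x\<bar>) ` {0..\<rho>}) \<in> {Sup ((\<lambda>x. \<bar>poly p x\<bar>) ` {0..\<rho>}) | p.
        degree p \<le> k \<and> poly p 1 = 1 \<and> poly_l1 p \<le> C}"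
      using assms(1) by (auto simp: admissible_poly_def)
    have "0 \<le> Sup ((\<lambda>x. \<bar>poly q x\<bar>) ` {0..\<rho>})" for q
      using assms(2) by (intro cSup_upper2[OF _ _ bdd_above_abs_poly, of "\<bar>poly q 0\<bar>"]) auto
    then show "bdd_below {Sup ((\<lambda>x. \<bar>poly p x\<bar>) ` {0..\<rho>}) | p.
        degree p \<le> k \<and> poly p 1 = 1 \<and> poly_l1 p \<le> C}"
      by (auto intro: bdd_belowI[of _ 0])
  qed
  also have "\<dots> \<le> B"
    using assms by (intro cSup_least) (auto simp: admissible_poly_def)
  finally show ?thesis .
qed

lemma le_rho_tilde:
  assumes "1 \<le> C" and bound: "\<And>p B. admissible_poly \<rho> k C B p \<Longrightarrow> a \<le> B"
  shows "a \<le> rho_tilde \<rho> k C"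
  unfolding rho_tilde_def
proof (rule cInf_greatest)
  have "admissible_poly \<rho> k C 1 1"
    using assms(1) by (simp add: admissible_poly_def poly_l1_def)
  then show "{Sup ((\<lambda>x. \<bar>poly p x\<bar>) ` {0..\<rho>}) | p.
      degree p \<le> k \<and> poly p 1 = 1 \<and> poly_l1 p \<le> C} \<noteq> {}"
    unfolding admissible_poly_def by blast
next
  fix s assume "s \<in> {Sup ((\<lambda>x. \<bar>poly p x\<bar>) ` {0..\<rho>}) | p.
      degree p \<le> k \<and> poly p 1 = 1 \<and> poly_l1 p \<le> C}"
  then obtain p where p: "degree p \<le> k" "poly p 1 = 1" "poly_l1 p \<le> C"
    and s: "s = Sup ((\<lambda>x. \<bar>poly p x\<bar>) ` {0..\<rho>})" by blast
  have "admissible_poly \<rho> k C s p"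
    using p by (auto simp: admissible_poly_def s intro: cSup_upper[OF _ bdd_above_abs_poly])
  then show "a \<le> s" by (rule bound)
qed

lemma rho_tilde_le_interpolate:
  assumes p\<^sub>0: "admissible_poly \<rho> k C\<^sub>0 B\<^sub>0 p\<^sub>0" and p\<^sub>1: "admissible_poly \<rho> k C\<^sub>1 B\<^sub>1 p\<^sub>1"
    and C: "C\<^sub>0 \<le> C" "C < C\<^sub>1" and "0 \<le> \<rho>"
  shows "rho_tilde \<rho> k C \<le> (C - C\<^sub>0) / (C\<^sub>1 - C\<^sub>0) * B\<^sub>1 + (C\<^sub>1 - C) / (C\<^sub>1 - C\<^sub>0) * B\<^sub>0"
proof -
  define t where "t = (C - C\<^sub>0) / (C\<^sub>1 - C\<^sub>0)"
  have t: "0 \<le> t" "t \<le> 1" and t': "1 - t = (C\<^sub>1 - C) / (C\<^sub>1 - C\<^sub>0)"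
    using C by (auto simp: t_def field_simps)
  have "t * (C\<^sub>1 - C\<^sub>0) = C - C\<^sub>0" using C by (simp add: t_def)
  then have "t * C\<^sub>1 + (1 - t) * C\<^sub>0 = C" by (simp add: algebra_simps)
  with admissible_poly_convex_comb[OF p\<^sub>1 p\<^sub>0 t]
  have "admissible_poly \<rho> k C (t * B\<^sub>1 + (1 - t) * B\<^sub>0) (smult t p\<^sub>1 + smult (1 - t) p\<^sub>0)"
    by simp
  then have "rho_tilde \<rho> k C \<le> t * B\<^sub>1 + (1 - t) * B\<^sub>0"
    using \<open>0 \<le> \<rho>\<close> by (rule rho_tilde_le_admissible)
  then show ?thesis by (subst (asm) t') (simp add: t_def)
qed

lemma le_rho_tilde_scaled:
  assumes "1 \<le> C" "0 \<le> R" and bound: "\<And>p B. admissible_poly \<rho> k C B p \<Longrightarrow> a \<le> (B + K) * R"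
  shows "a \<le> (rho_tilde \<rho> k C + K) * R"
proof (cases "R = 0")
  case True
  have "admissible_poly \<rho> k C 1 1"
    using assms(1) by (simp add: admissible_poly_def poly_l1_def)
  with bound True show ?thesis by fastforce
next
  case False
  with assms(2) have "0 < R" by simp
  have "a / R - K \<le> rho_tilde \<rho> k C"
    using assms(1) by (rule le_rho_tilde) (use bound \<open>0 < R\<close> in \<open>simp add: field_simps\<close>)
  with \<open>0 < R\<close> show ?thesis by (simp add: field_simps)
qed

section \<open>Chebyshev polynomials and the interpolation nodes\<close>

lemma poly_cheb_cos: "poly (cheb n) (cos \<theta>) = cos (real n * \<theta>)"
proof (induction n rule: cheb.induct)
  case (3 n)
  define \<phi> where "\<phi> = real (Suc n) * \<theta>"
  have "real (Suc (Suc n)) * \<theta> = \<phi> + \<theta>" "real n * \<theta> = \<phi> - \<theta>"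
    by (simp_all add: \<phi>_def algebra_simps)
  then have "cos (real (Suc (Suc n)) * \<theta>) = 2 * cos \<theta> * cos \<phi> - cos (real n * \<theta>)"
    by (simp add: cos_add cos_diff)
  with 3 show ?case by (simp add: \<phi>_def)
qed simp_all

lemma abs_poly_cheb_le_1: "\<bar>x\<bar> \<le> 1 \<Longrightarrow> \<bar>poly (cheb n) x\<bar> \<le> 1"
  using poly_cheb_cos[of n "arccos x"] by (simp add: cos_arccos_abs)

lemma poly_cheb_inverse_sum:
  fixes z :: real
  assumes "z \<noteq> 0"
  shows "poly (cheb n) ((z + 1 / z) / 2) = (z ^ n + 1 / z ^ n) / 2"
proof (induction n rule: cheb.induct)
  case (3 n)
  let ?y = "(z + 1 / z) / 2"
  have "poly (cheb (Suc (Suc n))) ?y = 2 * ?y * poly (cheb (Suc n)) ?y - poly (cheb n) ?y"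
    by simp
  also have "\<dots> = 2 * ?y * ((z ^ Suc n + 1 / z ^ Suc n) / 2) - (z ^ n + 1 / z ^ n) / 2"
    by (simp only: 3)
  also have "\<dots> = (z ^ Suc (Suc n) + 1 / z ^ Suc (Suc n)) / 2"
    using assms by (simp add: field_simps)
  finally show ?case .
qed simp_all

lemma degree_cheb_le: "degree (cheb n) \<le> n"
proof (induction n rule: cheb.induct)
  case (3 n)
  have "degree ([:0, 2:] * cheb (Suc n)) \<le> Suc (Suc n)"
    using degree_mult_le[of "[:0, 2:]" "cheb (Suc n)"] 3 by simp
  with 3 show ?case by (simp add: degree_diff_le)
qed simp_all

lemma beta_of_pos:
  assumes "0 < r" "r < 1"
  shows "0 < beta_of r"
proof -
  have "0 \<le> sqrt (1 - r)" "sqrt (1 - r) < 1" using assms by simp_all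
  then show ?thesis unfolding beta_of_def by (intro divide_pos_pos) linarith+
qed

text \<open>beta_of r is the point whose Joukowski image (beta + 1/beta)/2 is 2/r - 1, where
  the Chebyshev polynomials have the closed form of poly_cheb_inverse_sum.\<close>
lemma beta_of_joukowski:
  assumes "0 < r" "r < 1"
  shows "(beta_of r + 1 / beta_of r) / 2 = 2 / r - 1"
proof -
  define s where "s = sqrt (1 - r)"
  have s: "0 < s" "s < 1" "r = 1 - s * s" using assms by (auto simp: s_def)
  then have "1 - s * s \<noteq> 0" "1 + s \<noteq> 0" "1 - s \<noteq> 0" using assms(1) by auto
  then show ?thesis
    unfolding beta_of_def s_def[symmetric] by (subst s(3)) (simp add: field_simps)
qed

lemma rate_of_beta_of:
  assumes "0 < r" "r < 1"
  shows "0 < poly (cheb k) (2 / r - 1)"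
    and "rate_of_beta k (beta_of r) = 1 / poly (cheb k) (2 / r - 1)"
proof -
  define b where "b = beta_of r ^ k"
  have b: "0 < b" using beta_of_pos[OF assms] by (simp add: b_def)
  have cheb: "poly (cheb k) (2 / r - 1) = (b + 1 / b) / 2"
    using poly_cheb_inverse_sum[of "beta_of r" k] beta_of_pos[OF assms] beta_of_joukowski[OF assms]
    by (simp add: b_def)
  show "0 < poly (cheb k) (2 / r - 1)" using b unfolding cheb by (simp add: add_pos_pos)
  have "beta_of r ^ (2 * k) = b * b" by (simp add: b_def power_mult power2_eq_square mult.commute)
  then show "rate_of_beta k (beta_of r) = 1 / poly (cheb k) (2 / r - 1)"
    using b by (simp add: cheb rate_of_beta_def b_def[symmetric] field_simps)
qed

lemma poly_p_eps:
  "poly (p_eps \<rho> k \<epsilon>) x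
     = poly (cheb k) (2 * (x + \<epsilon>) / (\<rho> + \<epsilon>) - 1) / \<bar>poly (cheb k) (2 * (1 + \<epsilon>) / (\<rho> + \<epsilon>) - 1)\<bar>"
  by (simp add: p_eps_def poly_pcompose add_divide_distrib distrib_left algebra_simps)

lemma degree_p_eps_le: "degree (p_eps \<rho> k \<epsilon>) \<le> k"
proof -
  let ?q = "[:2 * \<epsilon> / (\<rho> + \<epsilon>) - 1, 2 / (\<rho> + \<epsilon>):]"
  have "degree (pcompose (cheb k) ?q) \<le> degree (cheb k) * degree ?q"
    by (rule degree_pcompose_le)
  also have "\<dots> \<le> k * 1"
    using degree_pCons_le[of "2 * \<epsilon> / (\<rho> + \<epsilon>) - 1" "[:2 / (\<rho> + \<epsilon>):]"]
    by (intro mult_mono degree_cheb_le) auto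
  finally show ?thesis
    unfolding p_eps_def using degree_smult_le order_trans by fastforce
qed

text \<open>The affine change of variables maps [0, rho] into [-1, 1], where the Chebyshev
  polynomial is bounded by 1, and 1 to 2/r - 1 with r = (rho + eps) / (1 + eps).\<close>
lemma p_eps_admissible:
  assumes "0 < \<rho>" "\<rho> < 1" "0 \<le> \<epsilon>"
  shows "admissible_poly \<rho> k (poly_l1 (p_eps \<rho> k \<epsilon>))
           (rate_of_beta k (beta_of ((\<rho> + \<epsilon>) / (1 + \<epsilon>)))) (p_eps \<rho> k \<epsilon>)"
proof -
  define r where "r = (\<rho> + \<epsilon>) / (1 + \<epsilon>)"
  have r: "0 < r" "r < 1" using assms by (auto simp: r_def field_simps)
  have one: "2 * (1 + \<epsilon>) / (\<rho> + \<epsilon>) - 1 = 2 / r - 1" using assms by (simp add: r_def)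
  define T where "T = poly (cheb k) (2 / r - 1)"
  have T: "0 < T" "rate_of_beta k (beta_of r) = 1 / T"
    using rate_of_beta_of[OF r] by (simp_all add: T_def)
  have "\<bar>poly (p_eps \<rho> k \<epsilon>) x\<bar> \<le> 1 / T" if "x \<in> {0..\<rho>}" for x
  proof -
    have "\<bar>2 * (x + \<epsilon>) / (\<rho> + \<epsilon>) - 1\<bar> \<le> 1"
      using that assms by (auto simp: field_simps abs_le_iff)
    then have "\<bar>poly (cheb k) (2 * (x + \<epsilon>) / (\<rho> + \<epsilon>) - 1)\<bar> \<le> 1" by (rule abs_poly_cheb_le_1)
    with T(1) show ?thesis
      unfolding poly_p_eps one T_def[symmetric] by (simp add: divide_right_mono)
  qed
  moreover have "poly (p_eps \<rho> k \<epsilon>) 1 = 1"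
    using T(1) unfolding poly_p_eps one T_def[symmetric] by simp
  ultimately show ?thesis
    using degree_p_eps_le T(2) by (simp add: admissible_poly_def r_def)
qed

lemma admissible_poly_monom:
  assumes "0 \<le> \<rho>"
  shows "admissible_poly \<rho> k 1 (\<rho> ^ k) (monom 1 k)"
proof -
  have "poly_l1 (monom 1 k) = 1"
    by (simp add: poly_l1_eq_sum_upto[OF degree_monom_le] coeff_monom)
  then show ?thesis
    by (auto simp: admissible_poly_def degree_monom_le poly_monom power_mono)
qed

text \<open>The monomial X^k recentred by half its maximum on [0, rho] and renormalised at 1.\<close>
lemma admissible_poly_shifted_monom:
  assumes "0 \<le> \<rho>" "\<rho> ^ k < 2" "0 < k"
  shows "admissible_poly \<rho> k ((2 + \<rho> ^ k) / (2 - \<rho> ^ k)) (\<rho> ^ k / (2 - \<rho> ^ k))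
           (smult (2 / (2 - \<rho> ^ k)) (monom 1 k - monom (\<rho> ^ k / 2) 0))"
    (is "admissible_poly _ _ _ _ ?p")
proof -
  define a where "a = 2 / (2 - \<rho> ^ k)"
  define h where "h = \<rho> ^ k / 2"
  have a: "0 < a" and h: "0 \<le> h" using assms(1,2) by (simp_all add: a_def h_def)
  have ah: "a * h = \<rho> ^ k / (2 - \<rho> ^ k)" using assms(2) by (simp add: a_def h_def field_simps)
  then have "a + a * h = (2 + \<rho> ^ k) / (2 - \<rho> ^ k)" by (simp add: a_def add_divide_distrib)
  have "degree (monom 1 k - monom h 0) \<le> k"
    using degree_monom_le[of h 0] by (intro degree_diff_le) (simp_all add: degree_monom_le)
  then have deg: "degree ?p \<le> k" by (simp add: h_def degree_smult_le order_trans)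
  have "\<bar>coeff ?p j\<bar> = (if j = k then a else 0) + (if j = 0 then a * h else 0)" for j
    using a h assms(3) by (auto simp: a_def[symmetric] h_def[symmetric] coeff_monom abs_mult)
  then have l1: "poly_l1 ?p = (2 + \<rho> ^ k) / (2 - \<rho> ^ k)"
    by (simp add: poly_l1_eq_sum_upto[OF deg] sum.distrib \<open>a + a * h = _\<close>)
  have "\<bar>poly ?p x\<bar> \<le> \<rho> ^ k / (2 - \<rho> ^ k)" if "x \<in> {0..\<rho>}" for x
  proof -
    have "0 \<le> x ^ k" "x ^ k \<le> \<rho> ^ k" using that by (simp_all add: power_mono)
    then have "\<bar>x ^ k - h\<bar> \<le> h" unfolding h_def by linarith
    then show ?thesis
      using a by (simp add: poly_monom abs_mult a_def[symmetric] h_def[symmetric] mult_left_mono ah[symmetric])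
  qed
  moreover have "poly ?p 1 = 1" using assms(2) by (simp add: poly_monom field_simps)
  ultimately show ?thesis using deg l1 by (simp add: admissible_poly_def)
qed

lemma admissible_poly_node:
  assumes "0 < \<rho>" "\<rho> < 1" "0 < k" "-1 \<le> i" "i \<le> int M + 1"
  shows "\<exists>p. admissible_poly \<rho> k (C_node \<rho> k M i) (rho_node \<rho> k M i) p"
proof -
  have "\<rho> ^ k \<le> 1" using assms(1,2) by (simp add: power_le_one)
  then have "\<rho> ^ k < 2" by simp
  consider "i = -1" | "i = 0" | "1 \<le> i \<and> i \<le> int M" | "i = int M + 1"
    using assms(4,5) by linarith
  then show ?thesis
  proof cases
    case 1
    then show ?thesis using admissible_poly_monom[of \<rho> k] assms(1)
      by (auto simp: C_node_def rho_node_def)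
  next
    case 2
    then show ?thesis using admissible_poly_shifted_monom[of \<rho> k] assms(1,3) \<open>\<rho> ^ k < 2\<close>
      by (auto simp: C_node_def rho_node_def)
  next
    case 3
    have "0 \<le> eps_i \<rho> i" using assms(1) by (simp add: eps_i_def)
    with 3 show ?thesis using p_eps_admissible assms(1,2)
      by (auto simp: C_node_def rho_node_def)
  next
    case 4
    then show ?thesis using p_eps_admissible[of \<rho> 0] assms(1,2)
      by (auto simp: C_node_def rho_node_def C_star_def rho_star_def)
  qed
qed

lemma rho_tilde_le_node_interpolation:
  assumes "0 < \<rho>" "\<rho> < 1" "1 \<le> C" "0 < k"
  shows "rho_tilde \<rho> k C
         \<le> Max ((\<lambda>i. max ((C - C_node \<rho> k M i) / (C_node \<rho> k M (i + 1) - C_node \<rho> k M i)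
                              * rho_node \<rho> k M (i + 1)
                            + (C_node \<rho> k M (i + 1) - C) / (C_node \<rho> k M (i + 1) - C_node \<rho> k M i)
                              * rho_node \<rho> k M i)
                           (rho_star \<rho> k)) ` {-1..int M})"
    (is "_ \<le> Max (?f ` ?I)")
proof -
  define CN where "CN = C_node \<rho> k M"
  have node: "\<exists>p. admissible_poly \<rho> k (CN i) (rho_node \<rho> k M i) p" if "i \<in> {-1..int M + 1}" for i
    using admissible_poly_node assms(1,2,4) that unfolding CN_def by auto
  have "\<exists>i\<in>?I. rho_tilde \<rho> k C \<le> ?f i"
  proof (cases "CN (int M + 1) \<le> C")
    case True
    with node[of "int M + 1"] obtain p where "admissible_poly \<rho> k C (rho_star \<rho> k) p"
      by (auto simp: rho_node_def intro: admissible_poly_mono)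
    then have "rho_tilde \<rho> k C \<le> rho_star \<rho> k"
      using assms(1) by (intro rho_tilde_le_admissible) auto
    then show ?thesis by (intro bexI[of _ "-1"]) auto
  next
    case False
    define J where "J = {j \<in> ?I. CN j \<le> C}"
    have "-1 \<in> J" using assms(3) by (simp add: J_def CN_def C_node_def)
    moreover have "finite J" unfolding J_def by (rule finite_subset[of _ ?I]) auto
    ultimately have "Max J \<in> J" and max: "\<And>j. j \<in> J \<Longrightarrow> j \<le> Max J"
      by (auto intro: Max_in)
    then obtain i where i: "i \<in> ?I" "CN i \<le> C" and "i = Max J" by (auto simp: J_def)
    have "C < CN (i + 1)"
    proof (cases "i + 1 \<le> int M")
      case True
      then show ?thesis using max[of "i + 1"] i \<open>i = Max J\<close> by (force simp: J_def)
    next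
      case False
      then have "i + 1 = int M + 1" using i(1) by simp
      with \<open>\<not> CN (int M + 1) \<le> C\<close> show ?thesis by simp
    qed
    moreover obtain p\<^sub>0 p\<^sub>1 where p\<^sub>0: "admissible_poly \<rho> k (CN i) (rho_node \<rho> k M i) p\<^sub>0"
      and p\<^sub>1: "admissible_poly \<rho> k (CN (i + 1)) (rho_node \<rho> k M (i + 1)) p\<^sub>1"
      using node[of i] node[of "i + 1"] i(1) by auto
    ultimately have "rho_tilde \<rho> k C \<le> (C - CN i) / (CN (i + 1) - CN i) * rho_node \<rho> k M (i + 1)
        + (CN (i + 1) - C) / (CN (i + 1) - CN i) * rho_node \<rho> k M i"
      using i(2) assms(1) by (intro rho_tilde_le_interpolate[OF p\<^sub>0 p\<^sub>1]) auto
    then have "rho_tilde \<rho> k C \<le> ?f i" by (simp add: CN_def max.coboundedI1)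
    then show ?thesis using i(1) by blast
  qed
  then obtain i where "i \<in> ?I" "rho_tilde \<rho> k C \<le> ?f i" ..
  moreover have "?f i \<le> Max (?f ` ?I)" using \<open>i \<in> ?I\<close> by (intro Max_ge) auto
  ultimately show ?thesis by linarith
qed

section \<open>Constrained Anderson acceleration\<close>

lemma caa_iter_0 [simp]: "caa_iter F x0 0 = x0"
  and caa_iter_Suc [simp]: "caa_iter F x0 (Suc i) = F (caa_iter F x0 i)"
  by (simp_all add: caa_iter_def)

definition caa_step :: "('a::real_vector \<Rightarrow> 'a) \<Rightarrow> 'a \<Rightarrow> nat \<Rightarrow> 'a" where
  "caa_step F x0 i = caa_iter F x0 i - caa_iter F x0 (Suc i)"

lemma caa_resid_eq: "caa_resid F x0 k c = (\<Sum>i\<le>k. c i *\<^sub>R caa_step F x0 i)"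
  by (simp add: caa_resid_def caa_step_def)

lemma norm_caa_step_le:
  assumes lip: "\<And>x y. norm (F x - F y) \<le> L * norm (x - y)" and "L \<le> 1"
  shows "norm (caa_step F x0 i) \<le> norm (F x0 - x0)"
proof (induction i)
  case 0
  then show ?case by (simp add: caa_step_def norm_minus_commute)
next
  case (Suc i)
  have "norm (caa_step F x0 (Suc i)) \<le> L * norm (caa_step F x0 i)"
    using lip by (simp add: caa_step_def)
  also have "\<dots> \<le> norm (caa_step F x0 i)"
    using mult_right_mono[OF \<open>L \<le> 1\<close> norm_ge_zero] by simp
  finally show ?case using Suc by simp
qed

lemma norm_caa_iter_diff_le:
  assumes "\<And>x y. norm (F x - F y) \<le> L * norm (x - y)" and "L \<le> 1"
  shows "norm (caa_iter F x0 i - x0) \<le> real i * norm (F x0 - x0)"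
proof (induction i)
  case (Suc i)
  have "caa_iter F x0 (Suc i) - x0 = (caa_iter F x0 i - x0) - caa_step F x0 i"
    by (simp add: caa_step_def)
  then have "norm (caa_iter F x0 (Suc i) - x0) \<le> norm (caa_iter F x0 i - x0) + norm (caa_step F x0 i)"
    by (metis norm_triangle_ineq4)
  with Suc norm_caa_step_le[OF assms, of x0 i] show ?case by (simp add: algebra_simps)
qed simp

lemma norm_sum_scaleR_le:
  assumes "\<And>i. i \<in> A \<Longrightarrow> norm (v i) \<le> B" "(\<Sum>i\<in>A. \<bar>c i\<bar>) \<le> C" "0 \<le> B"
  shows "norm (\<Sum>i\<in>A. c i *\<^sub>R v i) \<le> C * B"
proof -
  have "norm (\<Sum>i\<in>A. c i *\<^sub>R v i) \<le> (\<Sum>i\<in>A. \<bar>c i\<bar> * B)"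
    using assms(1) by (intro sum_norm_le) (simp add: mult_left_mono)
  also have "\<dots> \<le> C * B"
    using mult_right_mono[OF assms(2,3)] by (simp add: sum_distrib_right)
  finally show ?thesis .
qed

text \<open>Splitting F = g + xi, the residuals follow the linear recursion r_(i+1) = g r_i up to a
  perturbation of size alpha times the first residual per step.\<close>
lemma norm_caa_step_linearization_le:
  fixes g \<xi> F :: "'a::real_normed_vector \<Rightarrow> 'a"
  assumes lin: "linear g" and g: "\<And>y. norm (g y) \<le> norm y" and F: "\<And>x. F x = g x + \<xi> x"
    and \<xi>: "\<And>x y. norm (\<xi> x - \<xi> y) \<le> \<alpha> * norm (x - y)" and "0 \<le> \<alpha>"
    and lip: "\<And>x y. norm (F x - F y) \<le> L * norm (x - y)" and "L \<le> 1"
  shows "norm (caa_step F x0 i - (g ^^ i) (caa_step F x0 0)) \<le> real i * \<alpha> * norm (F x0 - x0)"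
proof (induction i)
  case (Suc i)
  let ?x = "caa_iter F x0" and ?d = "caa_step F x0 i - (g ^^ i) (caa_step F x0 0)"
  have "caa_step F x0 (Suc i) - (g ^^ Suc i) (caa_step F x0 0) = g ?d + (\<xi> (?x i) - \<xi> (?x (Suc i)))"
    by (simp add: caa_step_def F linear_diff[OF lin])
  then have "norm (caa_step F x0 (Suc i) - (g ^^ Suc i) (caa_step F x0 0))
      \<le> norm (g ?d) + norm (\<xi> (?x i) - \<xi> (?x (Suc i)))"
    by (simp only: norm_triangle_ineq)
  also have "\<dots> \<le> real i * \<alpha> * norm (F x0 - x0) + \<alpha> * norm (F x0 - x0)"
  proof (rule add_mono)
    show "norm (g ?d) \<le> real i * \<alpha> * norm (F x0 - x0)" using g Suc by (rule order_trans)
    have "norm (\<xi> (?x i) - \<xi> (?x (Suc i))) \<le> \<alpha> * norm (caa_step F x0 i)"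
      using \<xi> by (simp add: caa_step_def)
    also have "\<dots> \<le> \<alpha> * norm (F x0 - x0)"
      using norm_caa_step_le[OF lip \<open>L \<le> 1\<close>] \<open>0 \<le> \<alpha>\<close> by (rule mult_left_mono)
    finally show "norm (\<xi> (?x i) - \<xi> (?x (Suc i))) \<le> \<alpha> * norm (F x0 - x0)" .
  qed
  finally show ?case by (simp add: algebra_simps)
qed simp

lemma norm_self_adjoint_le:
  fixes g :: "'a::euclidean_space \<Rightarrow> 'a"
  assumes "linear g" "\<And>x y. g x \<bullet> y = x \<bullet> g y"
    and "\<And>x. 0 \<le> x \<bullet> g x" "\<And>x. x \<bullet> g x \<le> \<rho> * (x \<bullet> x)"
  shows "norm (g y) \<le> \<rho> * norm y"
proof -
  have "poly_map [:0, 1:] g y = g y" by (simp add: poly_map_def numeral_eq_Suc)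
  with norm_poly_map_le[OF assms, of "[:0, 1:]" \<rho> y] show ?thesis by simp
qed

lemma caa_feasible_coeff: "admissible_poly \<rho> k C B p \<Longrightarrow> caa_feasible k C (coeff p)"
  by (auto simp: admissible_poly_def caa_feasible_def poly_one_eq_sum_upto poly_l1_eq_sum_upto)

lemma norm_caa_resid_coeff_le:
  fixes g \<xi> F :: "'a::euclidean_space \<Rightarrow> 'a"
  assumes lin: "linear g" and sym: "\<And>x y. g x \<bullet> y = x \<bullet> g y"
    and spec: "\<And>x. 0 \<le> x \<bullet> g x" "\<And>x. x \<bullet> g x \<le> \<rho> * (x \<bullet> x)" and "\<rho> \<le> 1"
    and F: "\<And>x. F x = g x + \<xi> x"
    and \<xi>: "\<And>x y. norm (\<xi> x - \<xi> y) \<le> \<alpha> * norm (x - y)" and "0 \<le> \<alpha>"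
    and lip: "\<And>x y. norm (F x - F y) \<le> \<rho> * norm (x - y)"
    and p: "admissible_poly \<rho> k C B p"
  shows "norm (caa_resid F x0 k (coeff p)) \<le> (B + \<alpha> * real k * C) * norm (F x0 - x0)"
proof -
  let ?r = "caa_step F x0" and ?R = "norm (F x0 - x0)"
  have deg: "degree p \<le> k" and l1: "(\<Sum>i\<le>k. \<bar>coeff p i\<bar>) \<le> C"
    using p by (auto simp: admissible_poly_def poly_l1_eq_sum_upto)
  let ?E = "\<Sum>i\<le>k. coeff p i *\<^sub>R (?r i - (g ^^ i) (?r 0))"
  have split: "caa_resid F x0 k (coeff p) = poly_map p g (?r 0) + ?E"
    by (simp add: caa_resid_eq poly_map_eq_sum_upto[OF deg] scaleR_diff_right sum_subtractf)
  have main: "norm (poly_map p g (?r 0)) \<le> B * ?R"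
    using p by (intro norm_poly_map_le[OF lin sym spec, of p B, THEN order_trans])
      (auto simp: admissible_poly_def caa_step_def norm_minus_commute)
  have error: "norm ?E \<le> C * (real k * \<alpha> * ?R)"
  proof (rule norm_sum_scaleR_le[OF _ l1])
    have g: "norm (g y) \<le> norm y" for y
      using norm_self_adjoint_le[OF lin sym spec, of y] mult_right_mono[OF \<open>\<rho> \<le> 1\<close> norm_ge_zero, of y]
      by simp
    fix i assume "i \<in> {..k}"
    then have "real i * \<alpha> * ?R \<le> real k * \<alpha> * ?R"
      using \<open>0 \<le> \<alpha>\<close> by (intro mult_right_mono) auto
    with norm_caa_step_linearization_le[OF lin g F \<xi> \<open>0 \<le> \<alpha>\<close> lip \<open>\<rho> \<le> 1\<close>, of x0 i]
    show "norm (?r i - (g ^^ i) (?r 0)) \<le> real k * \<alpha> * ?R" by linarith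
  qed (use \<open>0 \<le> \<alpha>\<close> in simp)
  have "norm (caa_resid F x0 k (coeff p)) \<le> norm (poly_map p g (?r 0)) + norm ?E"
    unfolding split by (rule norm_triangle_ineq)
  also have "\<dots> \<le> B * ?R + C * (real k * \<alpha> * ?R)" using main error by (rule add_mono)
  also have "\<dots> = (B + \<alpha> * real k * C) * ?R" by (simp add: algebra_simps)
  finally show ?thesis .
qed

lemma norm_affine_combination_defect_le:
  fixes \<xi> :: "'a::real_normed_vector \<Rightarrow> 'b::real_normed_vector"
  assumes \<xi>: "\<And>x y. norm (\<xi> x - \<xi> y) \<le> \<alpha> * norm (x - y)" and "0 \<le> \<alpha>"
    and c: "(\<Sum>i\<in>A. c i) = 1" "(\<Sum>i\<in>A. \<bar>c i\<bar>) \<le> C"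
    and near: "\<And>i. i \<in> A \<Longrightarrow> norm (x i - x0) \<le> D" and "0 \<le> D"
  shows "norm (\<xi> (\<Sum>i\<in>A. c i *\<^sub>R x i) - \<xi> x0) + norm (\<Sum>i\<in>A. c i *\<^sub>R (\<xi> (x i) - \<xi> x0))
    \<le> 2 * (\<alpha> * C * D)"
proof -
  have "(\<Sum>i\<in>A. c i *\<^sub>R x i) - x0 = (\<Sum>i\<in>A. c i *\<^sub>R (x i - x0))"
    using c(1) by (simp add: scaleR_diff_right sum_subtractf flip: scaleR_sum_left)
  then have "norm ((\<Sum>i\<in>A. c i *\<^sub>R x i) - x0) \<le> C * D"
    using near c(2) \<open>0 \<le> D\<close> by (auto intro: norm_sum_scaleR_le)
  then have "norm (\<xi> (\<Sum>i\<in>A. c i *\<^sub>R x i) - \<xi> x0) \<le> \<alpha> * (C * D)"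
    using \<xi> mult_left_mono[OF _ \<open>0 \<le> \<alpha>\<close>] by (meson order_trans)
  moreover have "norm (\<xi> (x i) - \<xi> x0) \<le> \<alpha> * D" if "i \<in> A" for i
    using \<xi>[of "x i" x0] mult_left_mono[OF near[OF that] \<open>0 \<le> \<alpha>\<close>] by linarith
  then have "norm (\<Sum>i\<in>A. c i *\<^sub>R (\<xi> (x i) - \<xi> x0)) \<le> C * (\<alpha> * D)"
    using c(2) \<open>0 \<le> \<alpha>\<close> \<open>0 \<le> D\<close> by (intro norm_sum_scaleR_le) auto
  ultimately show ?thesis by (simp add: mult_ac)
qed

lemma caa_affine_combination_eq:
  assumes lin: "linear g" and F: "\<And>x. F x = g x + \<xi> x" and c: "(\<Sum>i\<le>k. c i) = 1"
    and xe: "xe = (\<Sum>i\<le>k. c i *\<^sub>R caa_iter F x0 i)"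
  shows "F xe - xe = (\<xi> xe - \<xi> x0) - (\<Sum>i\<le>k. c i *\<^sub>R (\<xi> (caa_iter F x0 i) - \<xi> x0))
           - caa_resid F x0 k c"
proof -
  let ?x = "caa_iter F x0"
  have "g xe = (\<Sum>i\<le>k. c i *\<^sub>R (?x (Suc i) - \<xi> (?x i)))"
    by (simp add: xe linear_sum[OF lin] linear_scale[OF lin] F)
  moreover have "(\<Sum>i\<le>k. c i *\<^sub>R \<xi> x0) = \<xi> x0"
    using c by (simp flip: scaleR_sum_left)
  ultimately show ?thesis
    by (simp add: F xe caa_resid_def scaleR_diff_right sum_subtractf algebra_simps sum.distrib)
qed

lemma caa_output_residual_le:
  fixes g \<xi> F :: "'a::euclidean_space \<Rightarrow> 'a"
  assumes lin: "linear g" and sym: "\<And>x y. g x \<bullet> y = x \<bullet> g y"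
    and spec: "\<And>x. 0 \<le> x \<bullet> g x" "\<And>x. x \<bullet> g x \<le> \<rho> * (x \<bullet> x)" and "\<rho> \<le> 1"
    and F: "\<And>x. F x = g x + \<xi> x"
    and \<xi>: "\<And>x y. norm (\<xi> x - \<xi> y) \<le> \<alpha> * norm (x - y)" and "0 \<le> \<alpha>"
    and lip: "\<And>x y. norm (F x - F y) \<le> \<rho> * norm (x - y)"
    and "1 \<le> C" and out: "caa_output F k C x0 xe"
  shows "norm (F xe - xe) \<le> (rho_tilde \<rho> k C + 3 * \<alpha> * real k * C) * norm (F x0 - x0)"
proof -
  let ?x = "caa_iter F x0" and ?R = "norm (F x0 - x0)"
  obtain c where c: "caa_feasible k C c"
    and opt: "\<And>d. caa_feasible k C d \<Longrightarrow> norm (caa_resid F x0 k c) \<le> norm (caa_resid F x0 k d)"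
    and xe: "xe = (\<Sum>i\<le>k. c i *\<^sub>R ?x i)"
    using out by (auto simp: caa_output_def)
  have c1: "(\<Sum>i\<le>k. c i) = 1" and cC: "(\<Sum>i\<le>k. \<bar>c i\<bar>) \<le> C"
    using c by (auto simp: caa_feasible_def)
  have "norm (?x i - x0) \<le> real k * ?R" if "i \<le> k" for i
  proof -
    have "real i * ?R \<le> real k * ?R" using that by (intro mult_right_mono) auto
    with norm_caa_iter_diff_le[OF lip \<open>\<rho> \<le> 1\<close>, of x0 i] show ?thesis by linarith
  qed
  then have defect: "norm (\<xi> xe - \<xi> x0) + norm (\<Sum>i\<le>k. c i *\<^sub>R (\<xi> (?x i) - \<xi> x0))
      \<le> 2 * (\<alpha> * C * (real k * ?R))"
    unfolding xe using \<xi> \<open>0 \<le> \<alpha>\<close> c1 cC by (intro norm_affine_combination_defect_le) auto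
  have "norm (F xe - xe) \<le> (B + 3 * \<alpha> * real k * C) * ?R" if p: "admissible_poly \<rho> k C B p" for p B
  proof -
    let ?D = "\<Sum>i\<le>k. c i *\<^sub>R (\<xi> (?x i) - \<xi> x0)"
    have "norm (F xe - xe) \<le> norm (\<xi> xe - \<xi> x0) + norm ?D + norm (caa_resid F x0 k c)"
      unfolding caa_affine_combination_eq[OF lin F c1 xe]
      using norm_triangle_ineq4[of "\<xi> xe - \<xi> x0 - ?D" "caa_resid F x0 k c"]
        norm_triangle_ineq4[of "\<xi> xe - \<xi> x0" ?D]
      by linarith
    also have "\<dots> \<le> 2 * (\<alpha> * C * (real k * ?R)) + norm (caa_resid F x0 k (coeff p))"
      using defect opt[OF caa_feasible_coeff[OF p]] by linarith
    also have "\<dots> \<le> 2 * (\<alpha> * C * (real k * ?R)) + (B + \<alpha> * real k * C) * ?R"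
      using norm_caa_resid_coeff_le[OF lin sym spec \<open>\<rho> \<le> 1\<close> F \<xi> \<open>0 \<le> \<alpha>\<close> lip p] by simp
    also have "\<dots> = (B + 3 * \<alpha> * real k * C) * ?R" by (simp add: algebra_simps)
    finally show ?thesis .
  qed
  with \<open>1 \<le> C\<close> show ?thesis by (intro le_rho_tilde_scaled) auto
qed

theorem proposition6:
  fixes F \<xi> :: "real ^ 'n \<Rightarrow> real ^ 'n"
    and G :: "real ^ 'n ^ 'n"
    and \<rho> \<alpha> C :: real and k :: nat and x0 xe :: "real ^ 'n"
  assumes rho: "0 < \<rho>" "\<rho> < 1"
    and alpha: "0 \<le> \<alpha>"
    and F_lip: "\<And>x y. norm (F x - F y) \<le> \<rho> * norm (x - y)"
    and F_dec: "\<And>x. F x = G *v x + \<xi> x"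
    and G_sym: "transpose G = G"
    and G_psd: "\<And>x. 0 \<le> x \<bullet> (G *v x)"
    and G_le: "\<And>x. x \<bullet> (G *v x) \<le> \<rho> * (x \<bullet> x)"
    and xi_lip: "\<And>x y. norm (\<xi> x - \<xi> y) \<le> \<alpha> * norm (x - y)"
    and C: "1 \<le> C"
    and k: "2 < k"
    and out: "caa_output F k C x0 xe"
  shows "norm (F xe - xe) \<le> (rho_tilde \<rho> k C + 3 * \<alpha> * real k * C) * norm (F x0 - x0)
    \<and> (\<forall>M::nat. 0 < M \<longrightarrow>
         rho_tilde \<rho> k C + 3 * \<alpha> * real k * C
         \<le> Max ((\<lambda>i. max ((C - C_node \<rho> k M i) / (C_node \<rho> k M (i + 1) - C_node \<rho> k M i)
                              * rho_node \<rho> k M (i + 1)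
                            + (C_node \<rho> k M (i + 1) - C) / (C_node \<rho> k M (i + 1) - C_node \<rho> k M i)
                              * rho_node \<rho> k M i)
                           (rho_star \<rho> k)) ` {-1..int M})
           + 3 * \<alpha> * real k * C)"
proof -
  have lin: "linear (\<lambda>x. G *v x)" by simp
  have sym: "(G *v x) \<bullet> y = x \<bullet> (G *v y)" for x y
    by (metis G_sym dot_lmul_matrix vector_transpose_matrix)
  have "norm (F xe - xe) \<le> (rho_tilde \<rho> k C + 3 * \<alpha> * real k * C) * norm (F x0 - x0)"
    using rho(2) by (intro caa_output_residual_le[OF lin sym G_psd G_le _ F_dec xi_lip alpha F_lip C out])
      simp
  moreover have "rho_tilde \<rho> k C
         \<le> Max ((\<lambda>i. max ((C - C_node \<rho> k M i) / (C_node \<rho> k M (i + 1) - C_node \<rho> k M i)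
                              * rho_node \<rho> k M (i + 1)
                            + (C_node \<rho> k M (i + 1) - C) / (C_node \<rho> k M (i + 1) - C_node \<rho> k M i)
                              * rho_node \<rho> k M i)
                           (rho_star \<rho> k)) ` {-1..int M})" for M
    using k by (intro rho_tilde_le_node_interpolation[OF rho C]) simp
  ultimately show ?thesis by simp
qed

end
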